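(* Let $f:\mathbb{R}^n\to\mathbb{R}$ be convex and continuously differentiable with $L_1$-Lipschitz gradient. Let the noisy objective be $\tilde f(x;\xi)=f(x)+\nu(x;\xi)$, where the noise is i.i.d. (across all evaluations and all $x$) with mean $0$ and variance $\sigma_a^2>0$. Consider the STARS iteration: given $x_k$, draw a standard Gaussian vector $u_k\in\mathbb{R}^n$ (mean $0$, covariance $I_n$), independent of everything else, and form $$s_{\mu_k}=\frac{\tilde f(x_k+\mu_k u_k;\xi_k)-\tilde f(x_k;\xi_{k-1})}{\mu_k}u_k,$$ where $\tilde f(x_k;\xi_{k-1})$ and $\tilde f(x_k+\mu_k u_k;\xi_k)$ are noisy evaluations with independent noise. If $\mu_k$ is set to the constant $$\mu^*=\left[\frac{8\sigma_a^2 n}{L_1^2(n+6)^3}\right]^{1/4},$$ then $$\mathbb{E}[\|s_{\mu_k}\|^2]\le 2(n+4)\|\nabla f(x_k)\|^2+C_2,\qquad C_2=2\sqrt{2}L_1\sigma_a\sqrt{n(n+6)^3},$$ where the expectation is over $u_k$ and the noise in the two evaluations, for the given $x_k$.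
   Context: $\|\cdot\|$ is the Euclidean norm. "$L_1$-Lipschitz gradient" means $\|\nabla f(x)-\nabla f(y)\|\le L_1\|x-y\|$ for all $x,y\in\mathbb{R}^n$. *)

theory Defs
  imports "HOL-Probability.Probability"
begin

definition std_gaussian :: "(real ^ 'n) measure" where
  "std_gaussian = density lborel
     (\<lambda>x. ennreal ((2 * pi) powr (- real CARD('n) / 2) * exp (- (norm x)\<^sup>2 / 2)))"

definition mu_star :: "real \<Rightarrow> real \<Rightarrow> nat \<Rightarrow> real" where
  "mu_star L1 \<sigma> n = (8 * \<sigma>\<^sup>2 * real n / (L1\<^sup>2 * (real n + 6) ^ 3)) powr (1/4)"

definition stars_step :: "(real ^ 'n \<Rightarrow> real) \<Rightarrow> real \<Rightarrow> real ^ 'n \<Rightarrow> real ^ 'n \<Rightarrow> real \<Rightarrow> real \<Rightarrow> real ^ 'n" where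
  "stars_step f \<mu> x u e1 e2 = (((f (x + \<mu> *\<^sub>R u) + e2) - (f x + e1)) / \<mu>) *\<^sub>R u"

end

theory Submission
  imports Defs
begin

text \<open>
  Write \<open>D = f (x + \<mu> u) - f x\<close>. Averaging over the two independent noise values gives
  \<open>\<bbbE> \<parallel>s\<^sub>\<mu>\<parallel>\<^sup>2 = \<bbbE>\<^sub>u \<parallel>u\<parallel>\<^sup>2 (D\<^sup>2 + 2\<sigma>\<^sup>2) / \<mu>\<^sup>2\<close>, and the Lipschitz gradient gives
  \<open>\<bar>D - \<mu> \<nabla>f(x)\<cdot>u\<bar> \<le> L\<^sub>1 \<mu>\<^sup>2 \<parallel>u\<parallel>\<^sup>2 / 2\<close>, hence
  \<open>D\<^sup>2 \<le> 2 \<mu>\<^sup>2 (\<nabla>f(x)\<cdot>u)\<^sup>2 + L\<^sub>1\<^sup>2 \<mu>\<^sup>4 \<parallel>u\<parallel>\<^sup>4 / 2\<close>. The Gaussian moments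
  \<open>\<bbbE> \<parallel>u\<parallel>\<^sup>2 = n\<close>, \<open>\<bbbE> (g\<cdot>u)\<^sup>2 \<parallel>u\<parallel>\<^sup>2 = (n + 2) \<parallel>g\<parallel>\<^sup>2\<close> and \<open>\<bbbE> \<parallel>u\<parallel>\<^sup>6 = n (n + 2) (n + 4)\<close>,
  computed coordinatewise from the moments of the one-dimensional normal distribution, then bound
  the second moment by \<open>2 (n + 2) \<parallel>\<nabla>f(x)\<parallel>\<^sup>2 + L\<^sub>1\<^sup>2 \<mu>\<^sup>2 n (n + 2) (n + 4) / 2 + 2 \<sigma>\<^sup>2 n / \<mu>\<^sup>2\<close>.
  The choice \<open>\<mu>\<^sup>*\<close> balances the last two terms (after enlarging \<open>n (n + 2) (n + 4)\<close> to
  \<open>(n + 6)\<^sup>3\<close>), which then add up to less than \<open>C\<^sub>2\<close>.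
\<close>

lemma norm_sq_eq_sum_Basis: "(norm u)\<^sup>2 = (\<Sum>b\<in>Basis. (u \<bullet> b)\<^sup>2)" for u :: "'a::euclidean_space"
  by (subst power2_norm_eq_inner, subst euclidean_inner) (simp add: power2_eq_square)

lemma integral_triple_sum:
  fixes F :: "'i \<Rightarrow> 'j \<Rightarrow> 'k \<Rightarrow> 'a \<Rightarrow> real"
  assumes "\<And>a b c. a \<in> A \<Longrightarrow> b \<in> B \<Longrightarrow> c \<in> C \<Longrightarrow> integrable M (F a b c)"
  shows "integrable M (\<lambda>x. \<Sum>a\<in>A. \<Sum>b\<in>B. \<Sum>c\<in>C. F a b c x)"
    and "(\<integral>x. (\<Sum>a\<in>A. \<Sum>b\<in>B. \<Sum>c\<in>C. F a b c x) \<partial>M) = (\<Sum>a\<in>A. \<Sum>b\<in>B. \<Sum>c\<in>C. integral\<^sup>L M (F a b c))"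
  using assms by (simp_all add: integral_sum)

section \<open>Moments of the standard Gaussian on \<open>\<real>\<^sup>n\<close>\<close>

lemma std_gaussian_eq_density_prod:
  "std_gaussian = density lborel (\<lambda>u::real^'n. ennreal (\<Prod>b\<in>Basis. std_normal_density (u \<bullet> b)))"
proof -
  have "(2 * pi) powr (- real CARD('n) / 2) * exp (- (norm u)\<^sup>2 / 2)
      = (\<Prod>b\<in>Basis. std_normal_density (u \<bullet> b))" for u :: "real^'n"
  proof -
    have "(\<Prod>b\<in>(Basis::(real^'n) set). 1 / sqrt (2 * pi)) = ((2 * pi) powr (-1/2)) ^ CARD('n)"
      by (simp add: powr_minus_divide powr_half_sqrt[symmetric])
    also have "\<dots> = (2 * pi) powr (- real CARD('n) / 2)"
      by (simp add: powr_realpow[symmetric] powr_powr)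
    finally have "(\<Prod>b\<in>(Basis::(real^'n) set). 1 / sqrt (2 * pi)) = (2 * pi) powr (- real CARD('n) / 2)" .
    moreover have "(\<Prod>b\<in>Basis. exp (- (u \<bullet> b)\<^sup>2 / 2)) = exp (- (norm u)\<^sup>2 / 2)"
      by (simp add: exp_sum[symmetric] norm_sq_eq_sum_Basis sum_negf sum_divide_distrib)
    moreover have "(\<Prod>b\<in>Basis. std_normal_density (u \<bullet> b))
        = (\<Prod>b\<in>(Basis::(real^'n) set). 1 / sqrt (2 * pi)) * (\<Prod>b\<in>Basis. exp (- (u \<bullet> b)\<^sup>2 / 2))"
      by (simp only: std_normal_density_def prod.distrib)
    ultimately show ?thesis
      by simp
  qed
  then show ?thesis
    unfolding std_gaussian_def by simp
qed

lemma std_gaussian_integral_prod: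
  fixes h :: "real ^ 'n \<Rightarrow> real \<Rightarrow> real"
  assumes h_int: "\<And>b. b \<in> Basis \<Longrightarrow> integrable lborel (\<lambda>y. std_normal_density y * h b y)"
    and [measurable]: "\<And>b. h b \<in> borel_measurable borel"
  shows "integrable std_gaussian (\<lambda>u. \<Prod>b\<in>Basis. h b (u \<bullet> b))"
    and "(\<integral>u. (\<Prod>b\<in>Basis. h b (u \<bullet> b)) \<partial>std_gaussian)
           = (\<Prod>b\<in>Basis. \<integral>y. std_normal_density y * h b y \<partial>lborel)"
proof -
  interpret P: product_sigma_finite "\<lambda>_::real^'n. lborel :: real measure" by standard
  define T where "T = (\<lambda>f. \<Sum>b\<in>(Basis::(real^'n) set). f b *\<^sub>R b)"
  define \<rho> where "\<rho> = (\<lambda>u::real^'n. \<Prod>b\<in>Basis. std_normal_density (u \<bullet> b))"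
  define F where "F = (\<lambda>u::real^'n. \<Prod>b\<in>Basis. h b (u \<bullet> b))"
  have [measurable]: "\<rho> \<in> borel_measurable borel"
    unfolding \<rho>_def by measurable
  have [measurable]: "F \<in> borel_measurable borel"
    unfolding F_def by measurable
  have [measurable]: "T \<in> measurable (\<Pi>\<^sub>M b\<in>Basis. lborel) borel"
    unfolding T_def by measurable
  have lborel_T: "(lborel :: (real^'n) measure) = distr (\<Pi>\<^sub>M b\<in>Basis. lborel) borel T"
    unfolding T_def by (rule lborel_eq)
  have T_coordinate: "T f \<bullet> b = f b" if "b \<in> Basis" for f b
    using that unfolding T_def by simp
  have product: "(\<lambda>f. \<rho> (T f) * F (T f)) = (\<lambda>f. \<Prod>b\<in>Basis. std_normal_density (f b) * h b (f b))"
    by (auto simp: \<rho>_def F_def T_coordinate prod.distrib intro!: prod.cong ext)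
  have gaussian: "std_gaussian = density lborel \<rho>"
    unfolding std_gaussian_eq_density_prod \<rho>_def ..
  have \<rho>_nonneg: "AE x in lborel. 0 \<le> \<rho> x"
    by (auto simp: \<rho>_def intro!: prod_nonneg)
  have "integrable (\<Pi>\<^sub>M b\<in>Basis. lborel) (\<lambda>f. \<Prod>b\<in>Basis. std_normal_density (f b) * h b (f b))"
    by (rule P.product_integrable_prod) (auto intro: h_int)
  then show "integrable std_gaussian F"
    unfolding gaussian
    by (subst integrable_density) (auto simp: \<rho>_nonneg, subst lborel_T, subst integrable_distr_eq, auto simp: product)
  have "(\<integral>u. F u \<partial>std_gaussian) = (\<integral>u. \<rho> u *\<^sub>R F u \<partial>lborel)"
    unfolding gaussian by (rule integral_density) (auto simp: \<rho>_nonneg)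
  also have "\<dots> = (\<integral>f. \<rho> (T f) * F (T f) \<partial>(\<Pi>\<^sub>M b\<in>Basis. lborel))"
    by (subst lborel_T, subst integral_distr) auto
  also have "\<dots> = (\<Prod>b\<in>Basis. \<integral>y. std_normal_density y * h b y \<partial>lborel)"
    unfolding product by (rule P.product_integral_prod) (auto intro: h_int)
  finally show "(\<integral>u. F u \<partial>std_gaussian) = (\<Prod>b\<in>Basis. \<integral>y. std_normal_density y * h b y \<partial>lborel)" .
qed

definition normal_moment :: "nat \<Rightarrow> real" where
  "normal_moment k = (\<integral>y. std_normal_density y * y ^ k \<partial>lborel)"

lemma normal_moment_values:
  "normal_moment 0 = 1" "normal_moment 1 = 0" "normal_moment 2 = 1"
  "normal_moment 3 = 0" "normal_moment 4 = 3" "normal_moment 6 = 15"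
  using integral_std_normal_moment_even[of 0] integral_std_normal_moment_odd[of 0]
    integral_std_normal_moment_even[of 1] integral_std_normal_moment_odd[of 1]
    integral_std_normal_moment_even[of 2] integral_std_normal_moment_even[of 3]
  by (simp_all add: normal_moment_def fact_numeral)

text \<open>The simplifier turns the exponent sums arising below into \<open>Suc\<close>-numerals, so the values are needed in this form too.\<close>

lemma normal_moment_values_Suc:
  "normal_moment (Suc 0) = 0" "normal_moment (Suc (Suc 0)) = 1" "normal_moment (Suc (Suc (Suc 0))) = 0"
  "normal_moment (Suc (Suc (Suc (Suc 0)))) = 3" "normal_moment (Suc (Suc (Suc (Suc (Suc (Suc 0)))))) = 15"
  using normal_moment_values by (simp_all add: numeral_eq_Suc)

lemma std_gaussian_monomial:
  fixes a b c :: "real ^ 'n" and i j k :: nat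
  assumes "a \<in> Basis" "b \<in> Basis" "c \<in> Basis"
  defines "e \<equiv> \<lambda>d. (if d = a then i else 0) + (if d = b then j else 0) + (if d = c then k else 0)"
  shows "integrable std_gaussian (\<lambda>u. (u \<bullet> a) ^ i * (u \<bullet> b) ^ j * (u \<bullet> c) ^ k)"
    and "(\<integral>u. (u \<bullet> a) ^ i * (u \<bullet> b) ^ j * (u \<bullet> c) ^ k \<partial>std_gaussian)
           = (\<Prod>d\<in>{a, b, c}. normal_moment (e d))"
proof -
  have monomial: "(u \<bullet> a) ^ i * (u \<bullet> b) ^ j * (u \<bullet> c) ^ k = (\<Prod>d\<in>Basis. (u \<bullet> d) ^ e d)"
    for u :: "real^'n"
  proof -
    have "x ^ (if P then m else 0) = (if P then x ^ m else 1)" for x :: real and P m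
      by simp
    then show ?thesis
      unfolding e_def power_add prod.distrib using assms by (simp add: prod.delta)
  qed
  show "integrable std_gaussian (\<lambda>u. (u \<bullet> a) ^ i * (u \<bullet> b) ^ j * (u \<bullet> c) ^ k)"
    unfolding monomial
    by (rule std_gaussian_integral_prod(1)) (auto intro: integrable_std_normal_moment)
  have "(\<integral>u. (u \<bullet> a) ^ i * (u \<bullet> b) ^ j * (u \<bullet> c) ^ k \<partial>std_gaussian)
      = (\<Prod>d\<in>Basis. normal_moment (e d))"
    unfolding monomial normal_moment_def
    by (rule std_gaussian_integral_prod(2)) (auto intro: integrable_std_normal_moment)
  also have "\<dots> = (\<Prod>d\<in>{a, b, c}. normal_moment (e d))"
    using assms by (intro prod.mono_neutral_right) (auto simp: e_def normal_moment_values)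
  finally show "(\<integral>u. (u \<bullet> a) ^ i * (u \<bullet> b) ^ j * (u \<bullet> c) ^ k \<partial>std_gaussian)
      = (\<Prod>d\<in>{a, b, c}. normal_moment (e d))" .
qed

lemma std_gaussian_moment_1_1_2:
  fixes a b c :: "real ^ 'n"
  assumes "a \<in> Basis" "b \<in> Basis" "c \<in> Basis"
  shows "integrable std_gaussian (\<lambda>u. (u \<bullet> a) * (u \<bullet> b) * (u \<bullet> c)\<^sup>2)"
    and "(\<integral>u. (u \<bullet> a) * (u \<bullet> b) * (u \<bullet> c)\<^sup>2 \<partial>std_gaussian)
           = (if a = b then if a = c then 3 else 1 else 0)"
  using std_gaussian_monomial[OF assms, of 1 1 2]
  by (auto simp: normal_moment_values normal_moment_values_Suc insert_commute)

lemma std_gaussian_moment_2_2_2: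
  fixes a b c :: "real ^ 'n"
  assumes "a \<in> Basis" "b \<in> Basis" "c \<in> Basis"
  shows "integrable std_gaussian (\<lambda>u. (u \<bullet> a)\<^sup>2 * (u \<bullet> b)\<^sup>2 * (u \<bullet> c)\<^sup>2)"
    and "(\<integral>u. (u \<bullet> a)\<^sup>2 * (u \<bullet> b)\<^sup>2 * (u \<bullet> c)\<^sup>2 \<partial>std_gaussian)
           = 1 + (if a = b then 2 else 0) + (if b = c then 2 else 0) + (if a = c then 2 else 0)
               + (if a = b \<and> b = c then 8 else 0)"
  using std_gaussian_monomial[OF assms, of 2 2 2]
  by (auto simp: normal_moment_values normal_moment_values_Suc insert_commute)

lemma std_gaussian_norm_sq:
  shows "integrable std_gaussian (\<lambda>u::real^'n. (norm u)\<^sup>2)"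
    and "(\<integral>u. (norm u)\<^sup>2 \<partial>(std_gaussian :: (real^'n) measure)) = real CARD('n)"
proof -
  have coordinate: "integrable std_gaussian (\<lambda>u::real^'n. (u \<bullet> c)\<^sup>2)"
      "(\<integral>u. (u \<bullet> c)\<^sup>2 \<partial>(std_gaussian :: (real^'n) measure)) = 1"
    if "c \<in> Basis" for c :: "real^'n"
    using std_gaussian_monomial[OF that that that, of 0 0 2] by (simp_all add: normal_moment_values_Suc)
  then show "integrable std_gaussian (\<lambda>u::real^'n. (norm u)\<^sup>2)"
      "(\<integral>u. (norm u)\<^sup>2 \<partial>(std_gaussian :: (real^'n) measure)) = real CARD('n)"
    unfolding norm_sq_eq_sum_Basis by (simp_all add: integral_sum)
qed

lemma std_gaussian_inner_sq_norm_sq: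
  fixes g :: "real ^ 'n"
  shows "integrable std_gaussian (\<lambda>u. (g \<bullet> u)\<^sup>2 * (norm u)\<^sup>2)"
    and "(\<integral>u. (g \<bullet> u)\<^sup>2 * (norm u)\<^sup>2 \<partial>std_gaussian) = (real CARD('n) + 2) * (norm g)\<^sup>2"
proof -
  have expand: "(g \<bullet> u)\<^sup>2 * (norm u)\<^sup>2 = (\<Sum>a\<in>Basis. \<Sum>b\<in>Basis. \<Sum>c\<in>Basis.
                  (g \<bullet> a) * (g \<bullet> b) * ((u \<bullet> a) * (u \<bullet> b) * (u \<bullet> c)\<^sup>2))" for u
    unfolding norm_sq_eq_sum_Basis euclidean_inner[of g u] power2_eq_square[of "sum _ _"]
    by (simp add: sum_product sum_distrib_left sum_distrib_right mult_ac)
  have terms: "integrable std_gaussian (\<lambda>u. (g \<bullet> a) * (g \<bullet> b) * ((u \<bullet> a) * (u \<bullet> b) * (u \<bullet> c)\<^sup>2))"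
    if "a \<in> Basis" "b \<in> Basis" "c \<in> Basis" for a b c
    using std_gaussian_moment_1_1_2(1)[OF that] by simp
  show "integrable std_gaussian (\<lambda>u. (g \<bullet> u)\<^sup>2 * (norm u)\<^sup>2)"
    unfolding expand by (rule integral_triple_sum(1)[OF terms])
  have inner_sum: "(\<Sum>c\<in>(Basis::(real^'n) set). if a = c then 3 else 1) = real CARD('n) + 2"
    if "a \<in> Basis" for a :: "real^'n"
  proof -
    have "(\<Sum>c\<in>(Basis::(real^'n) set). if a = c then 3 else 1)
        = (\<Sum>c\<in>(Basis::(real^'n) set). 1 + (if a = c then 2 else 0 :: real))"
      by (rule sum.cong) auto
    then show ?thesis
      using that by (simp add: sum.distrib)
  qed
  have "(\<integral>u. (g \<bullet> u)\<^sup>2 * (norm u)\<^sup>2 \<partial>std_gaussian)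
      = (\<Sum>a\<in>Basis. \<Sum>b\<in>Basis. \<Sum>c\<in>Basis.
           (g \<bullet> a) * (g \<bullet> b) * (if a = b then if a = c then 3 else 1 else 0))"
    unfolding expand
    by (subst integral_triple_sum(2)[OF terms], assumption+) (simp add: std_gaussian_moment_1_1_2(2))
  also have "\<dots> = (\<Sum>a\<in>Basis. (g \<bullet> a)\<^sup>2 * (real CARD('n) + 2))"
  proof (rule sum.cong[OF refl])
    fix a :: "real^'n"
    assume a: "a \<in> Basis"
    have "(\<Sum>b\<in>Basis. \<Sum>c\<in>Basis. (g \<bullet> a) * (g \<bullet> b) * (if a = b then if a = c then 3 else 1 else 0))
        = (\<Sum>b\<in>Basis. if a = b
             then (g \<bullet> a) * (g \<bullet> a) * (\<Sum>c\<in>(Basis::(real^'n) set). if a = c then 3 else 1) else 0)"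
      by (rule sum.cong) (auto simp: sum_distrib_left)
    then show "(\<Sum>b\<in>Basis. \<Sum>c\<in>Basis. (g \<bullet> a) * (g \<bullet> b) * (if a = b then if a = c then 3 else 1 else 0))
        = (g \<bullet> a)\<^sup>2 * (real CARD('n) + 2)"
      using a by (simp add: inner_sum power2_eq_square)
  qed
  also have "\<dots> = (real CARD('n) + 2) * (norm g)\<^sup>2"
    by (simp add: norm_sq_eq_sum_Basis[of g] sum_distrib_left sum_distrib_right mult_ac)
  finally show "(\<integral>u. (g \<bullet> u)\<^sup>2 * (norm u)\<^sup>2 \<partial>std_gaussian) = (real CARD('n) + 2) * (norm g)\<^sup>2" .
qed

lemma std_gaussian_norm_pow_6:
  shows "integrable std_gaussian (\<lambda>u::real^'n. (norm u) ^ 6)"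
    and "(\<integral>u. (norm u) ^ 6 \<partial>(std_gaussian :: (real^'n) measure))
           = real CARD('n) * (real CARD('n) + 2) * (real CARD('n) + 4)"
proof -
  define n where "n = real CARD('n)"
  have expand: "(norm u) ^ 6 = (\<Sum>a\<in>Basis. \<Sum>b\<in>Basis. \<Sum>c\<in>Basis. (u \<bullet> a)\<^sup>2 * (u \<bullet> b)\<^sup>2 * (u \<bullet> c)\<^sup>2)"
    for u :: "real^'n"
  proof -
    have "(norm u) ^ 6 = (norm u)\<^sup>2 * (norm u)\<^sup>2 * (norm u)\<^sup>2"
      by algebra
    then show ?thesis
      unfolding norm_sq_eq_sum_Basis[of u] by (simp add: sum_product sum_distrib_left sum_distrib_right mult_ac)
  qed
  have terms: "integrable std_gaussian (\<lambda>u::real^'n. (u \<bullet> a)\<^sup>2 * (u \<bullet> b)\<^sup>2 * (u \<bullet> c)\<^sup>2)"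
    if "a \<in> Basis" "b \<in> Basis" "c \<in> Basis" for a b c
    using std_gaussian_moment_2_2_2(1)[OF that] by simp
  show "integrable std_gaussian (\<lambda>u::real^'n. (norm u) ^ 6)"
    unfolding expand by (rule integral_triple_sum(1)[OF terms])
  have inner_sum: "(\<Sum>c\<in>(Basis::(real^'n) set). 1 + (if a = b then 2 else 0) + (if b = c then 2 else 0)
                     + (if a = c then 2 else 0) + (if a = b \<and> b = c then 8 else 0 :: real))
      = n + 4 + (if a = b then 2 * n + 8 else 0)" if "a \<in> Basis" "b \<in> Basis" for a b :: "real^'n"
    using that by (simp add: sum.distrib n_def algebra_simps)
  have "(\<integral>u. (norm u) ^ 6 \<partial>(std_gaussian :: (real^'n) measure))
      = (\<Sum>a\<in>(Basis::(real^'n) set). \<Sum>b\<in>(Basis::(real^'n) set). \<Sum>c\<in>(Basis::(real^'n) set).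
           1 + (if a = b then 2 else 0) + (if b = c then 2 else 0) + (if a = c then 2 else 0)
             + (if a = b \<and> b = c then 8 else 0 :: real))"
    unfolding expand
    by (subst integral_triple_sum(2)[OF terms], assumption+) (simp add: std_gaussian_moment_2_2_2(2))
  also have "\<dots> = (\<Sum>a\<in>(Basis::(real^'n) set). \<Sum>b\<in>(Basis::(real^'n) set).
                     n + 4 + (if a = b then 2 * n + 8 else 0))"
    by (intro sum.cong refl inner_sum)
  also have "\<dots> = n * (n + 2) * (n + 4)"
    by (simp add: sum.distrib n_def algebra_simps)
  finally show "(\<integral>u. (norm u) ^ 6 \<partial>(std_gaussian :: (real^'n) measure))
      = real CARD('n) * (real CARD('n) + 2) * (real CARD('n) + 4)"
    unfolding n_def .
qed

section \<open>The forward difference along a direction\<close>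

lemma lipschitz_gradient_taylor_bound:
  fixes f :: "'a::real_inner \<Rightarrow> real" and grad :: "'a \<Rightarrow> 'a"
  assumes grad: "\<And>y. GDERIV f y :> grad y"
    and lipschitz: "\<And>y z. norm (grad y - grad z) \<le> L * norm (y - z)"
  shows "\<bar>f (x + v) - f x - grad x \<bullet> v\<bar> \<le> L / 2 * (norm v)\<^sup>2"
proof -
  have deriv: "((\<lambda>t. f (x + t *\<^sub>R v)) has_real_derivative (grad (x + t *\<^sub>R v) \<bullet> v)) (at t)" for t
  proof -
    have "((\<lambda>t. x + t *\<^sub>R v) has_derivative (\<lambda>h. h *\<^sub>R v)) (at t)"
      by (auto intro!: derivative_eq_intros)
    moreover have "(f has_derivative (\<lambda>h. h \<bullet> grad (x + t *\<^sub>R v))) (at (x + t *\<^sub>R v))"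
      using grad[of "x + t *\<^sub>R v"] unfolding gderiv_def .
    ultimately show ?thesis
      unfolding has_field_derivative_def
      by (rule has_derivative_eq_rhs[OF has_derivative_compose]) (auto simp: fun_eq_iff inner_commute)
  qed
  define c where "c = L * (norm v)\<^sup>2"
  have slope: "\<bar>grad (x + t *\<^sub>R v) \<bullet> v - grad x \<bullet> v\<bar> \<le> c * t" if "0 \<le> t" for t
  proof -
    have "\<bar>grad (x + t *\<^sub>R v) \<bullet> v - grad x \<bullet> v\<bar> \<le> norm (grad (x + t *\<^sub>R v) - grad x) * norm v"
      by (metis Cauchy_Schwarz_ineq2 inner_diff_left)
    also have "\<dots> \<le> (L * norm (t *\<^sub>R v)) * norm v"
      using lipschitz[of "x + t *\<^sub>R v" x] by (intro mult_right_mono) auto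
    also have "\<dots> = c * t"
      using that by (simp add: c_def power2_eq_square)
    finally show ?thesis .
  qed
  define \<phi> where "\<phi> = (\<lambda>t. f (x + t *\<^sub>R v) - t * (grad x \<bullet> v))"
  have deriv_\<phi>: "(\<phi> has_real_derivative (grad (x + t *\<^sub>R v) \<bullet> v - grad x \<bullet> v)) (at t)" for t
    unfolding \<phi>_def by (auto intro!: derivative_eq_intros deriv)
  have upper: "\<phi> 1 - c / 2 * 1\<^sup>2 \<le> \<phi> 0 - c / 2 * 0\<^sup>2"
  proof (rule DERIV_nonpos_imp_nonincreasing[of 0 1 "\<lambda>t. \<phi> t - c / 2 * t\<^sup>2"])
    fix t :: real
    assume "0 \<le> t" "t \<le> 1"
    then show "\<exists>y. ((\<lambda>t. \<phi> t - c / 2 * t\<^sup>2) has_real_derivative y) (at t) \<and> y \<le> 0"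
      using slope[of t] by (intro exI[of _ "grad (x + t *\<^sub>R v) \<bullet> v - grad x \<bullet> v - c * t"] conjI)
        (auto intro!: derivative_eq_intros deriv_\<phi>)
  qed simp
  have lower: "\<phi> 0 + c / 2 * 0\<^sup>2 \<le> \<phi> 1 + c / 2 * 1\<^sup>2"
  proof (rule DERIV_nonneg_imp_nondecreasing[of 0 1 "\<lambda>t. \<phi> t + c / 2 * t\<^sup>2"])
    fix t :: real
    assume "0 \<le> t" "t \<le> 1"
    then show "\<exists>y. ((\<lambda>t. \<phi> t + c / 2 * t\<^sup>2) has_real_derivative y) (at t) \<and> y \<ge> 0"
      using slope[of t] by (intro exI[of _ "grad (x + t *\<^sub>R v) \<bullet> v - grad x \<bullet> v + c * t"] conjI)
        (auto intro!: derivative_eq_intros deriv_\<phi>)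
  qed simp
  show ?thesis
    using upper lower unfolding abs_le_iff by (simp add: \<phi>_def c_def)
qed

lemma forward_difference_sq_bound:
  fixes f :: "'a::real_inner \<Rightarrow> real" and grad :: "'a \<Rightarrow> 'a"
  assumes "\<And>y. GDERIV f y :> grad y"
    and "\<And>y z. norm (grad y - grad z) \<le> L * norm (y - z)"
    and \<mu>: "\<mu> > 0"
  shows "(norm u)\<^sup>2 / \<mu>\<^sup>2 * ((f (x + \<mu> *\<^sub>R u) - f x)\<^sup>2 + 2 * \<sigma>\<^sup>2)
    \<le> 2 * ((grad x \<bullet> u)\<^sup>2 * (norm u)\<^sup>2) + L\<^sup>2 * \<mu>\<^sup>2 / 2 * norm u ^ 6 + 2 * \<sigma>\<^sup>2 / \<mu>\<^sup>2 * (norm u)\<^sup>2"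
proof -
  define s where "s = (norm u)\<^sup>2"
  define t where "t = grad x \<bullet> u"
  define r where "r = f (x + \<mu> *\<^sub>R u) - f x - \<mu> * t"
  have "\<bar>r\<bar> \<le> L * \<mu>\<^sup>2 * s / 2"
    using lipschitz_gradient_taylor_bound[OF assms(1,2), of x "\<mu> *\<^sub>R u"] \<mu>
    by (simp add: r_def t_def s_def power_mult_distrib)
  then have r_sq: "r\<^sup>2 \<le> (L * \<mu>\<^sup>2 * s / 2)\<^sup>2"
    by (metis abs_ge_zero abs_le_square_iff order_trans power2_abs abs_of_nonneg)
  have "(f (x + \<mu> *\<^sub>R u) - f x)\<^sup>2 = (\<mu> * t + r)\<^sup>2"
    by (simp add: r_def)
  also have "\<dots> \<le> 2 * (\<mu> * t)\<^sup>2 + 2 * r\<^sup>2"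
    using sum_squares_ge_zero[of "\<mu> * t - r" 0] by (simp add: power2_eq_square algebra_simps)
  also have "\<dots> \<le> 2 * (\<mu> * t)\<^sup>2 + 2 * (L * \<mu>\<^sup>2 * s / 2)\<^sup>2"
    using r_sq by simp
  finally have "s / \<mu>\<^sup>2 * (f (x + \<mu> *\<^sub>R u) - f x)\<^sup>2 \<le> s / \<mu>\<^sup>2 * (2 * (\<mu> * t)\<^sup>2 + 2 * (L * \<mu>\<^sup>2 * s / 2)\<^sup>2)"
    by (intro mult_left_mono) (auto simp: s_def)
  also have "\<dots> = 2 * (t\<^sup>2 * s) + L\<^sup>2 * \<mu>\<^sup>2 / 2 * s ^ 3"
    using \<mu> by (simp add: field_simps power2_eq_square power3_eq_cube)
  finally show ?thesis
    unfolding s_def t_def by (simp add: algebra_simps flip: power_mult)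
qed

section \<open>Second moment of the STARS direction\<close>

lemma nn_integral_noisy_difference_sq:
  fixes N :: "real measure"
  assumes N: "prob_space N" and sets_N: "sets N = sets borel"
    and "integrable N (\<lambda>e. e\<^sup>2)" and "(\<integral>e. e \<partial>N) = 0" and "(\<integral>e. e\<^sup>2 \<partial>N) = \<sigma>\<^sup>2"
    and c: "0 \<le> c"
  shows "(\<integral>\<^sup>+ (e1, e2). ennreal (c * (a + e2 - e1)\<^sup>2) \<partial>(N \<Otimes>\<^sub>M N)) = ennreal (c * (a\<^sup>2 + 2 * \<sigma>\<^sup>2))"
proof -
  interpret prob_space N by (rule N)
  have shifted: "integrable N (\<lambda>e. c * (b + e)\<^sup>2)" "(\<integral>e. c * (b + e)\<^sup>2 \<partial>N) = c * (b\<^sup>2 + \<sigma>\<^sup>2)" for b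
  proof -
    have [measurable]: "(\<lambda>e::real. e) \<in> borel_measurable N"
      by (subst measurable_cong_sets[OF sets_N refl]) simp
    have "integrable N (\<lambda>e. e)"
      by (rule square_integrable_imp_integrable) (use assms in auto)
    moreover have "(\<lambda>e. c * (b + e)\<^sup>2) = (\<lambda>e. c * b\<^sup>2 + (2 * c * b * e + c * e\<^sup>2))"
      by (auto simp: power2_eq_square algebra_simps)
    ultimately show "integrable N (\<lambda>e. c * (b + e)\<^sup>2)" "(\<integral>e. c * (b + e)\<^sup>2 \<partial>N) = c * (b\<^sup>2 + \<sigma>\<^sup>2)"
      using assms by (simp_all add: prob_space algebra_simps)
  qed
  have measurable: "(\<lambda>(e1, e2). ennreal (c * (a + e2 - e1)\<^sup>2)) \<in> borel_measurable (N \<Otimes>\<^sub>M N)"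
    by (subst measurable_cong_sets[OF sets_pair_measure_cong[OF sets_N sets_N] refl]) measurable
  have "(\<integral>\<^sup>+ (e1, e2). ennreal (c * (a + e2 - e1)\<^sup>2) \<partial>(N \<Otimes>\<^sub>M N))
      = (\<integral>\<^sup>+ e1. \<integral>\<^sup>+ e2. ennreal (c * ((a - e1) + e2)\<^sup>2) \<partial>N \<partial>N)"
    by (subst nn_integral_fst[symmetric, OF measurable]) (simp add: algebra_simps)
  also have "\<dots> = (\<integral>\<^sup>+ e1. ennreal (c * (- a + e1)\<^sup>2 + c * \<sigma>\<^sup>2) \<partial>N)"
  proof (rule nn_integral_cong)
    fix e1
    have "(a - e1)\<^sup>2 = (- a + e1)\<^sup>2"
      by (simp add: power2_commute)
    then show "(\<integral>\<^sup>+ e2. ennreal (c * ((a - e1) + e2)\<^sup>2) \<partial>N) = ennreal (c * (- a + e1)\<^sup>2 + c * \<sigma>\<^sup>2)"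
      using shifted[of "a - e1"] c by (simp add: nn_integral_eq_integral distrib_left)
  qed
  also have "\<dots> = ennreal (\<integral>e1. c * (- a + e1)\<^sup>2 + c * \<sigma>\<^sup>2 \<partial>N)"
    using shifted(1)[of "- a"] c by (intro nn_integral_eq_integral) auto
  also have "\<dots> = ennreal (c * (a\<^sup>2 + 2 * \<sigma>\<^sup>2))"
    using shifted[of "- a"] by (simp add: prob_space algebra_simps)
  finally show ?thesis .
qed

lemma stars_step_second_moment_le:
  fixes f :: "real ^ 'n \<Rightarrow> real" and grad :: "real ^ 'n \<Rightarrow> real ^ 'n" and N :: "real measure"
  assumes grad: "\<And>y. GDERIV f y :> grad y"
    and lipschitz: "\<And>y z. norm (grad y - grad z) \<le> L * norm (y - z)"
    and N: "prob_space N" and sets_N: "sets N = sets borel"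
    and sq_int: "integrable N (\<lambda>e. e\<^sup>2)" and mean: "(\<integral>e. e \<partial>N) = 0"
    and var: "(\<integral>e. e\<^sup>2 \<partial>N) = \<sigma>\<^sup>2"
    and \<mu>: "\<mu> > 0"
  defines "n \<equiv> real CARD('n)"
  shows "(\<integral>\<^sup>+ (u, e1, e2). ennreal ((norm (stars_step f \<mu> x u e1 e2))\<^sup>2) \<partial>(std_gaussian \<Otimes>\<^sub>M (N \<Otimes>\<^sub>M N)))
    \<le> ennreal (2 * (n + 2) * (norm (grad x))\<^sup>2 + L\<^sup>2 * \<mu>\<^sup>2 / 2 * (n * (n + 2) * (n + 4))
                + 2 * \<sigma>\<^sup>2 / \<mu>\<^sup>2 * n)"
proof -
  interpret NN: prob_space "N \<Otimes>\<^sub>M N"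
    by (intro prob_space_pair N)
  have "continuous_on UNIV f"
    using grad unfolding gderiv_def
    by (intro continuous_at_imp_continuous_on ballI has_derivative_continuous) auto
  then have [measurable]: "f \<in> borel_measurable borel"
    by (rule borel_measurable_continuous_onI)
  have sets_product: "sets (std_gaussian \<Otimes>\<^sub>M (N \<Otimes>\<^sub>M N)) = sets (borel \<Otimes>\<^sub>M (borel \<Otimes>\<^sub>M borel))"
    using sets_N unfolding std_gaussian_def by (intro sets_pair_measure_cong) simp_all
  have measurable: "(\<lambda>(u, e1, e2). ennreal ((norm (stars_step f \<mu> x u e1 e2))\<^sup>2))
      \<in> borel_measurable (std_gaussian \<Otimes>\<^sub>M (N \<Otimes>\<^sub>M N))"
    unfolding stars_step_def by (subst measurable_cong_sets[OF sets_product refl]) measurable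
  define D where "D u = f (x + \<mu> *\<^sub>R u) - f x" for u
  define bound where "bound u = 2 * ((grad x \<bullet> u)\<^sup>2 * (norm u)\<^sup>2) + L\<^sup>2 * \<mu>\<^sup>2 / 2 * norm u ^ 6
    + 2 * \<sigma>\<^sup>2 / \<mu>\<^sup>2 * (norm u)\<^sup>2" for u
  have square: "(norm (stars_step f \<mu> x u e1 e2))\<^sup>2 = (norm u)\<^sup>2 / \<mu>\<^sup>2 * (D u + e2 - e1)\<^sup>2" for u e1 e2
    unfolding stars_step_def D_def using \<mu> by (simp add: power_mult_distrib power_divide field_simps)
  have "(\<integral>\<^sup>+ (u, e1, e2). ennreal ((norm (stars_step f \<mu> x u e1 e2))\<^sup>2) \<partial>(std_gaussian \<Otimes>\<^sub>M (N \<Otimes>\<^sub>M N)))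
      = (\<integral>\<^sup>+ u. \<integral>\<^sup>+ (e1, e2). ennreal ((norm u)\<^sup>2 / \<mu>\<^sup>2 * (D u + e2 - e1)\<^sup>2) \<partial>(N \<Otimes>\<^sub>M N) \<partial>std_gaussian)"
    by (subst NN.nn_integral_fst[symmetric, OF measurable]) (simp add: split_beta' square)
  also have "\<dots> = (\<integral>\<^sup>+ u. ennreal ((norm u)\<^sup>2 / \<mu>\<^sup>2 * ((D u)\<^sup>2 + 2 * \<sigma>\<^sup>2)) \<partial>std_gaussian)"
    by (intro nn_integral_cong nn_integral_noisy_difference_sq[OF N sets_N sq_int mean var]) simp
  also have "\<dots> \<le> (\<integral>\<^sup>+ u. ennreal (bound u) \<partial>std_gaussian)"
    unfolding D_def bound_def
    by (intro nn_integral_mono ennreal_leI forward_difference_sq_bound[OF grad lipschitz \<mu>])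
  also have "\<dots> = ennreal (\<integral>u. bound u \<partial>std_gaussian)"
  proof (rule nn_integral_eq_integral)
    show "integrable std_gaussian bound"
      unfolding bound_def
      by (intro Bochner_Integration.integrable_add Bochner_Integration.integrable_mult_right
          std_gaussian_inner_sq_norm_sq(1) std_gaussian_norm_pow_6(1) std_gaussian_norm_sq(1))
  qed (simp add: bound_def)
  also have "\<dots> = ennreal (2 * (n + 2) * (norm (grad x))\<^sup>2 + L\<^sup>2 * \<mu>\<^sup>2 / 2 * (n * (n + 2) * (n + 4))
                + 2 * \<sigma>\<^sup>2 / \<mu>\<^sup>2 * n)"
    unfolding bound_def n_def
    by (simp add: std_gaussian_inner_sq_norm_sq std_gaussian_norm_pow_6 std_gaussian_norm_sq del: ennreal_plus)
  finally show ?thesis .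
qed

section \<open>The optimal smoothing step\<close>

lemma mu_star_error_terms_le:
  fixes L \<sigma> :: real and n :: nat
  assumes n: "n \<ge> 1" and L: "L > 0" and \<sigma>: "\<sigma> > 0"
  defines "\<mu> \<equiv> mu_star L \<sigma> n"
  shows "L\<^sup>2 * \<mu>\<^sup>2 / 2 * (real n * (real n + 2) * (real n + 4)) + 2 * \<sigma>\<^sup>2 / \<mu>\<^sup>2 * real n
    \<le> 2 * sqrt 2 * L * \<sigma> * sqrt (real n * (real n + 6) ^ 3)"
proof -
  define q where "q = 8 * \<sigma>\<^sup>2 * real n / (L\<^sup>2 * (real n + 6) ^ 3)"
  have q: "q > 0"
    unfolding q_def using n L \<sigma> by (intro divide_pos_pos mult_pos_pos) auto
  define m where "m = \<mu>\<^sup>2"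
  have m: "m > 0" "m\<^sup>2 = q"
  proof -
    have "m = q powr (1/4) * q powr (1/4)"
      unfolding m_def \<mu>_def mu_star_def q_def[symmetric] by (simp add: power2_eq_square)
    also have "\<dots> = sqrt q"
      using q by (simp add: powr_add[symmetric] powr_half_sqrt)
    finally show "m > 0" "m\<^sup>2 = q"
      using q by auto
  qed
  define K where "K = L * \<sigma> * sqrt (real n * (real n + 6) ^ 3)"
  define X where "X = L\<^sup>2 * m / 2 * (real n + 6) ^ 3"
  define Y where "Y = 2 * \<sigma>\<^sup>2 / m * real n"
  \<comment> \<open>\<open>\<mu>\<^sup>*\<close> is chosen so that the bias term \<open>X\<close> is exactly twice the noise term \<open>Y\<close>.\<close>
  have "X = 2 * Y"
    using m L n unfolding X_def Y_def q_def by (simp add: field_simps power2_eq_square)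
  moreover have "X * Y = K\<^sup>2"
    using m n unfolding X_def Y_def K_def by (simp add: field_simps power_mult_distrib)
  ultimately have "K\<^sup>2 / 2 = Y\<^sup>2"
    by (simp add: power2_eq_square)
  moreover have "Y \<ge> 0"
    using m unfolding Y_def by simp
  ultimately have "Y = sqrt (K\<^sup>2 / 2)"
    by simp
  then have Y: "Y = K / sqrt 2"
    using L \<sigma> by (simp add: K_def real_sqrt_divide)
  have "L\<^sup>2 * \<mu>\<^sup>2 / 2 * (real n * (real n + 2) * (real n + 4)) \<le> X"
    unfolding X_def m_def by (rule mult_left_mono) (simp add: eval_nat_numeral algebra_simps, simp)
  moreover have "X + Y \<le> 2 * sqrt 2 * K"
  proof -
    have "X + Y = 3 * K / sqrt 2"
      using \<open>X = 2 * Y\<close> Y by simp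
    also have "\<dots> \<le> 4 * K / sqrt 2"
      using L \<sigma> by (simp add: K_def divide_right_mono)
    also have "\<dots> = 2 * sqrt 2 * K"
      by (simp add: field_simps)
    finally show ?thesis .
  qed
  ultimately show ?thesis
    unfolding Y_def m_def K_def by linarith
qed

theorem lemma2:
  fixes f :: "real ^ 'n \<Rightarrow> real"
    and grad :: "real ^ 'n \<Rightarrow> real ^ 'n"
    and L1 \<sigma> :: real
    and N :: "real measure"
    and x :: "real ^ 'n"
  assumes convex: "convex_on UNIV f"
    and grad: "\<And>y. GDERIV f y :> grad y"
    and grad_cont: "continuous_on UNIV grad"
    and lipschitz: "\<And>y z. norm (grad y - grad z) \<le> L1 * norm (y - z)"
    and L1_pos: "L1 > 0"
    and noise_prob: "prob_space N"
    and noise_sets: "sets N = sets borel"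
    and noise_sq_int: "integrable N (\<lambda>e. e\<^sup>2)"
    and noise_mean: "(\<integral>e. e \<partial>N) = 0"
    and noise_var: "(\<integral>e. e\<^sup>2 \<partial>N) = \<sigma>\<^sup>2"
    and sigma_pos: "\<sigma> > 0"
  shows "(\<integral>\<^sup>+ (u, e1, e2). ennreal ((norm (stars_step f (mu_star L1 \<sigma> CARD('n)) x u e1 e2))\<^sup>2)
            \<partial>(std_gaussian \<Otimes>\<^sub>M (N \<Otimes>\<^sub>M N)))
         \<le> ennreal (2 * (real CARD('n) + 4) * (norm (grad x))\<^sup>2
              + 2 * sqrt 2 * L1 * \<sigma> * sqrt (real CARD('n) * (real CARD('n) + 6) ^ 3))"
proof -
  let ?n = "real CARD('n)" and ?\<mu> = "mu_star L1 \<sigma> CARD('n)"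
  have n: "CARD('n) \<ge> 1"
    by (simp add: Suc_leI)
  have "?\<mu> > 0"
    using n L1_pos sigma_pos unfolding mu_star_def by (auto intro!: divide_pos_pos)
  then have "(\<integral>\<^sup>+ (u, e1, e2). ennreal ((norm (stars_step f ?\<mu> x u e1 e2))\<^sup>2) \<partial>(std_gaussian \<Otimes>\<^sub>M (N \<Otimes>\<^sub>M N)))
      \<le> ennreal (2 * (?n + 2) * (norm (grad x))\<^sup>2 + (L1\<^sup>2 * ?\<mu>\<^sup>2 / 2 * (?n * (?n + 2) * (?n + 4))
                  + 2 * \<sigma>\<^sup>2 / ?\<mu>\<^sup>2 * ?n))"
    using stars_step_second_moment_le[OF grad lipschitz noise_prob noise_sets noise_sq_int noise_mean noise_var]
    by (simp add: add.assoc)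
  also have "\<dots> \<le> ennreal (2 * (?n + 4) * (norm (grad x))\<^sup>2
                  + 2 * sqrt 2 * L1 * \<sigma> * sqrt (?n * (?n + 6) ^ 3))"
    using mu_star_error_terms_le[OF n L1_pos sigma_pos]
    by (intro ennreal_leI add_mono mult_right_mono) auto
  finally show ?thesis .
qed

end
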